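(* Let $2\le n_0\le n_1$ be integers. Let $k=\frac{\log n_1}{\log n_0}$ and let $x_0$ be the unique root of the equation $x-1-x^{\frac{k-1}{k}}=0$ in the interval $[1,\infty)$. Then $$ch(K_{n_0,n_1})\le \left\lceil \frac{\log n_1}{\log x_0}\right\rceil+1.$$
   Context: All logarithms are to base 2. For a graph $G=(V,E)$, the choice number $ch(G)$ is the minimum integer $k$ such that for every assignment of a list $S(v)$ of at least $k$ colors to each vertex $v\in V$, there is a proper vertex coloring of $G$ assigning to each vertex $v$ a color from $S(v)$. $K_{n_0,n_1}$ denotes the complete bipartite graph with parts of sizes $n_0$ and $n_1$. *)

theory Defs
  imports Complex_Main
begin

text \<open>A (simple, undirected) graph is given by a vertex set V and a symmetric
  edge relation E. Colours are natural numbers (any countably infinite palette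
  suffices since all lists are finite).\<close>

definition choosable :: "'v set \<Rightarrow> ('v \<Rightarrow> 'v \<Rightarrow> bool) \<Rightarrow> nat \<Rightarrow> bool" where
  "choosable V E k \<longleftrightarrow>
     (\<forall>S :: 'v \<Rightarrow> nat set.
        (\<forall>v\<in>V. finite (S v) \<and> card (S v) \<ge> k) \<longrightarrow>
        (\<exists>f :: 'v \<Rightarrow> nat. (\<forall>v\<in>V. f v \<in> S v) \<and>
                           (\<forall>u\<in>V. \<forall>v\<in>V. E u v \<longrightarrow> f u \<noteq> f v)))"

definition choice_number :: "'v set \<Rightarrow> ('v \<Rightarrow> 'v \<Rightarrow> bool) \<Rightarrow> nat" where
  "choice_number V E = (LEAST k. choosable V E k)"

definition Kbip_V :: "nat \<Rightarrow> nat \<Rightarrow> (nat + nat) set" where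
  "Kbip_V n0 n1 = Inl ` {..<n0} \<union> Inr ` {..<n1}"

definition Kbip_E :: "(nat + nat) \<Rightarrow> (nat + nat) \<Rightarrow> bool" where
  "Kbip_E u v \<longleftrightarrow> (isl u \<and> \<not> isl v) \<or> (\<not> isl u \<and> isl v)"

definition ch_Kbip :: "nat \<Rightarrow> nat \<Rightarrow> nat" where
  "ch_Kbip n0 n1 = choice_number (Kbip_V n0 n1) Kbip_E"

end

theory Submission
  imports Defs
begin

text \<open>Colour the union C of all lists at random, putting each colour into a set A independently
  with probability p; vertices of the first part take a colour of their list inside A, vertices
  of the second part one outside A. A list of size m misses A with probability (1 - p)^m and is
  swallowed by A with probability p^m, so the expected number of stuck vertices is at most
  n0 (1 - p)^m + n1 p^m. Since A = C leaves every vertex of the second part stuck, an expectation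
  at most 1 forces some A with no stuck vertex at all. For p = 1/x0 and m = \<lceil>log n1 / log x0\<rceil> + 1
  the defining equation of x0 gives 1 - p = x0^(-1/k), which makes both terms at most 1 - p
  and p respectively.\<close>

lemma sum_Pow_prod_mem:
  fixes g :: "'a \<Rightarrow> bool \<Rightarrow> 'b::comm_semiring_1"
  assumes "finite C"
  shows "(\<Sum>A\<in>Pow C. \<Prod>c\<in>C. g c (c \<in> A)) = (\<Prod>c\<in>C. g c True + g c False)"
proof -
  have split: "(\<Prod>c\<in>C. g c (c \<in> A)) = (\<Prod>c\<in>A. g c True) * (\<Prod>c\<in>C - A. g c False)"
    if "A \<subseteq> C" for A
  proof -
    have "(\<Prod>c\<in>C. g c (c \<in> A)) = (\<Prod>c\<in>C - A. g c (c \<in> A)) * (\<Prod>c\<in>A. g c (c \<in> A))"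
      by (rule prod.subset_diff[OF that assms])
    also have "\<dots> = (\<Prod>c\<in>C - A. g c False) * (\<Prod>c\<in>A. g c True)"
      by (intro arg_cong2[where f = "(*)"] prod.cong) auto
    finally show ?thesis by (simp only: mult.commute)
  qed
  have "(\<Sum>A\<in>Pow C. \<Prod>c\<in>C. g c (c \<in> A))
          = (\<Sum>A\<in>Pow C. (\<Prod>c\<in>A. g c True) * (\<Prod>c\<in>C - A. g c False))"
    using split by (intro sum.cong) auto
  also have "\<dots> = (\<Prod>c\<in>C. g c True + g c False)"
    by (rule prod_add[symmetric, OF assms])
  finally show ?thesis .
qed

definition bernoulli_subset_prob :: "real \<Rightarrow> 'a set \<Rightarrow> 'a set \<Rightarrow> real" where
  "bernoulli_subset_prob p C A = (\<Prod>c\<in>C. if c \<in> A then p else 1 - p)"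

lemma bernoulli_subset_prob_pos:
  "0 < p \<Longrightarrow> p < 1 \<Longrightarrow> 0 < bernoulli_subset_prob p C A"
  unfolding bernoulli_subset_prob_def by (intro prod_pos) auto

lemma sum_bernoulli_subset_prob_forall:
  assumes "finite C" "L \<subseteq> C"
  shows "(\<Sum>A\<in>Pow C. of_bool (\<forall>c\<in>L. P (c \<in> A)) * bernoulli_subset_prob p C A)
           = (of_bool (P True) * p + of_bool (P False) * (1 - p)) ^ card L"
proof -
  define q where "q = of_bool (P True) * p + of_bool (P False) * (1 - p)"
  define g where "g c b = (if c \<in> L then of_bool (P b) else 1) * (if b then p else 1 - p)" for c b
  have "of_bool (\<forall>c\<in>L. P (c \<in> A)) * bernoulli_subset_prob p C A = (\<Prod>c\<in>C. g c (c \<in> A))" for A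
  proof -
    have "(\<Prod>c\<in>C. if c \<in> L then of_bool (P (c \<in> A)) else 1) = (\<Prod>c\<in>L. of_bool (P (c \<in> A)) :: real)"
      using assms by (simp add: prod.If_cases Int_absorb1)
    also have "\<dots> = of_bool (\<forall>c\<in>L. P (c \<in> A))"
      using assms finite_subset by (induction L rule: infinite_finite_induct) auto
    finally show ?thesis
      unfolding g_def bernoulli_subset_prob_def prod.distrib by simp
  qed
  then have "(\<Sum>A\<in>Pow C. of_bool (\<forall>c\<in>L. P (c \<in> A)) * bernoulli_subset_prob p C A)
               = (\<Prod>c\<in>C. g c True + g c False)"
    using sum_Pow_prod_mem[OF assms(1)] by simp
  also have "\<dots> = (\<Prod>c\<in>C. if c \<in> L then q else 1)"
    by (intro prod.cong) (auto simp: g_def q_def algebra_simps)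
  also have "\<dots> = q ^ card L"
    using assms by (simp add: prod.If_cases Int_absorb1)
  finally show ?thesis unfolding q_def .
qed

lemma sum_bernoulli_subset_prob: "finite C \<Longrightarrow> (\<Sum>A\<in>Pow C. bernoulli_subset_prob p C A) = 1"
  using sum_bernoulli_subset_prob_forall[of C "{}"] by simp

lemma exists_less_of_weighted_average_le:
  fixes w X :: "'a \<Rightarrow> real"
  assumes "finite I" and "\<forall>i\<in>I. 0 \<le> w i"
    and "(\<Sum>i\<in>I. w i * X i) \<le> c * (\<Sum>i\<in>I. w i)"
    and "a \<in> I" and "0 < w a" and "c < X a"
  shows "\<exists>i\<in>I. X i < c"
proof (rule ccontr)
  assume "\<not> (\<exists>i\<in>I. X i < c)"
  then have "0 < (\<Sum>i\<in>I. w i * (X i - c))"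
    using assms by (intro sum_pos2[of I a]) (auto simp: not_less)
  also have "\<dots> = (\<Sum>i\<in>I. w i * X i) - c * (\<Sum>i\<in>I. w i)"
    by (simp add: right_diff_distrib sum_subtractf sum_distrib_left mult.commute)
  finally show False using assms(3) by simp
qed

lemma exists_set_meeting_and_not_containing:
  fixes S :: "'i \<Rightarrow> 'c set" and T :: "'j \<Rightarrow> 'c set" and p :: real
  assumes "finite I" "finite J" "2 \<le> card J"
    and S: "\<forall>i\<in>I. finite (S i) \<and> m \<le> card (S i)"
    and T: "\<forall>j\<in>J. finite (T j) \<and> m \<le> card (T j)"
    and p: "0 < p" "p < 1"
    and bound: "card I * (1 - p) ^ m + card J * p ^ m \<le> 1"
  shows "\<exists>A. (\<forall>i\<in>I. S i \<inter> A \<noteq> {}) \<and> (\<forall>j\<in>J. \<not> T j \<subseteq> A)"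
proof -
  define C where "C = (\<Union>i\<in>I. S i) \<union> (\<Union>j\<in>J. T j)"
  define w where "w = bernoulli_subset_prob p C"
  define bad where "bad A = card {i\<in>I. S i \<inter> A = {}} + card {j\<in>J. T j \<subseteq> A}" for A
  have "finite C" using assms(1,2) S T unfolding C_def by auto
  have S_sub: "S i \<subseteq> C" if "i \<in> I" for i using that unfolding C_def by auto
  have T_sub: "T j \<subseteq> C" if "j \<in> J" for j using that unfolding C_def by auto
  have bad_eq: "real (bad A) = (\<Sum>i\<in>I. of_bool (\<forall>c\<in>S i. c \<notin> A)) + (\<Sum>j\<in>J. of_bool (\<forall>c\<in>T j. c \<in> A))" for A
    using assms(1,2) by (simp add: bad_def disjoint_iff subset_eq Int_def Ball_def)
  have "(\<Sum>A\<in>Pow C. w A * real (bad A))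
          = (\<Sum>A\<in>Pow C. \<Sum>i\<in>I. of_bool (\<forall>c\<in>S i. c \<notin> A) * w A)
            + (\<Sum>A\<in>Pow C. \<Sum>j\<in>J. of_bool (\<forall>c\<in>T j. c \<in> A) * w A)"
    unfolding bad_eq distrib_left sum.distrib sum_distrib_left by (simp add: mult.commute)
  also have "\<dots> = (\<Sum>i\<in>I. \<Sum>A\<in>Pow C. of_bool (\<forall>c\<in>S i. c \<notin> A) * w A)
            + (\<Sum>j\<in>J. \<Sum>A\<in>Pow C. of_bool (\<forall>c\<in>T j. c \<in> A) * w A)"
    by (intro arg_cong2[where f = "(+)"] sum.swap)
  also have "\<dots> = (\<Sum>i\<in>I. (1 - p) ^ card (S i)) + (\<Sum>j\<in>J. p ^ card (T j))"
  proof -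
    have "(\<Sum>A\<in>Pow C. of_bool (\<forall>c\<in>S i. c \<notin> A) * w A) = (1 - p) ^ card (S i)" if "i \<in> I" for i
      using sum_bernoulli_subset_prob_forall[OF \<open>finite C\<close> S_sub[OF that], of Not] by (simp add: w_def)
    moreover have "(\<Sum>A\<in>Pow C. of_bool (\<forall>c\<in>T j. c \<in> A) * w A) = p ^ card (T j)" if "j \<in> J" for j
      using sum_bernoulli_subset_prob_forall[OF \<open>finite C\<close> T_sub[OF that], of "\<lambda>b. b"] by (simp add: w_def)
    ultimately show ?thesis by simp
  qed
  also have "\<dots> \<le> (\<Sum>i\<in>I. (1 - p) ^ m) + (\<Sum>j\<in>J. p ^ m)"
    using S T p by (intro add_mono sum_mono power_decreasing) auto
  also have "\<dots> \<le> 1 * (\<Sum>A\<in>Pow C. w A)"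
    using bound sum_bernoulli_subset_prob[OF \<open>finite C\<close>] unfolding w_def by simp
  finally have average: "(\<Sum>A\<in>Pow C. w A * real (bad A)) \<le> 1 * (\<Sum>A\<in>Pow C. w A)" .
  have "{j\<in>J. T j \<subseteq> C} = J" using T_sub by auto
  then have "card J \<le> bad C" by (simp add: bad_def)
  have "\<exists>A\<in>Pow C. real (bad A) < 1"
  proof (rule exists_less_of_weighted_average_le[OF _ _ average, where a = C])
    have "0 < w A" for A
      using bernoulli_subset_prob_pos[OF p] by (simp add: w_def)
    then show "\<forall>A\<in>Pow C. 0 \<le> w A" "0 < w C"
      by (simp_all add: less_imp_le)
    show "1 < real (bad C)" using \<open>card J \<le> bad C\<close> assms(3) by simp
  qed (use \<open>finite C\<close> in simp_all)
  then obtain A where "real (bad A) < 1" by blast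
  then have "bad A = 0" by simp
  then have "{i\<in>I. S i \<inter> A = {}} = {}" "{j\<in>J. T j \<subseteq> A} = {}"
    using assms(1,2) by (simp_all add: bad_def)
  then show ?thesis by blast
qed

lemma choosable_Kbip:
  fixes p :: real
  assumes "0 < p" "p < 1" "2 \<le> n1"
    and "n0 * (1 - p) ^ m + n1 * p ^ m \<le> 1"
  shows "choosable (Kbip_V n0 n1) Kbip_E m"
  unfolding choosable_def
proof (intro allI impI)
  fix S :: "nat + nat \<Rightarrow> nat set"
  assume "\<forall>v\<in>Kbip_V n0 n1. finite (S v) \<and> m \<le> card (S v)"
  then obtain A where A: "\<forall>i\<in>{..<n0}. S (Inl i) \<inter> A \<noteq> {}" "\<forall>j\<in>{..<n1}. \<not> S (Inr j) \<subseteq> A"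
    using exists_set_meeting_and_not_containing[of "{..<n0}" "{..<n1}" "S \<circ> Inl" m "S \<circ> Inr" p]
      assms by (auto simp: Kbip_V_def)
  define f where "f v = (SOME c. c \<in> (if isl v then S v \<inter> A else S v - A))" for v
  have f: "f v \<in> (if isl v then S v \<inter> A else S v - A)" if "v \<in> Kbip_V n0 n1" for v
    unfolding f_def using that A by (subst some_in_eq) (auto simp: Kbip_V_def)
  show "\<exists>f. (\<forall>v\<in>Kbip_V n0 n1. f v \<in> S v) \<and>
             (\<forall>u\<in>Kbip_V n0 n1. \<forall>v\<in>Kbip_V n0 n1. Kbip_E u v \<longrightarrow> f u \<noteq> f v)"
  proof (intro exI conjI ballI impI)
    show "f v \<in> S v" if "v \<in> Kbip_V n0 n1" for v
      using f[OF that] by (auto split: if_splits)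
    show "f u \<noteq> f v" if "u \<in> Kbip_V n0 n1" "v \<in> Kbip_V n0 n1" "Kbip_E u v" for u v
      using f[OF that(1)] f[OF that(2)] that(3) by (auto simp: Kbip_E_def split: if_splits)
  qed
qed

lemma one_minus_inverse_eq_powr:
  fixes x k :: real
  assumes "0 < x" and "x - 1 = x powr ((k - 1) / k)" and "k \<noteq> 0"
  shows "1 - 1 / x = x powr (- 1 / k)"
proof -
  have "1 - 1 / x = x powr ((k - 1) / k) / x powr 1"
    using assms(1,2) by (simp add: field_simps)
  also have "\<dots> = x powr ((k - 1) / k - 1)"
    by (rule powr_diff[symmetric])
  also have "(k - 1) / k - 1 = - 1 / k"
    using assms(3) by (simp add: field_simps)
  finally show ?thesis .
qed

lemma le_power_nat_ceiling_log:
  fixes x y :: real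
  assumes "1 < x" and "0 < y"
  shows "y \<le> x ^ nat \<lceil>log x y\<rceil>"
proof -
  have "y = x powr log x y" using assms by simp
  also have "\<dots> \<le> x powr real (nat \<lceil>log x y\<rceil>)"
    using assms(1) by (intro powr_mono) linarith+
  also have "\<dots> = x ^ nat \<lceil>log x y\<rceil>"
    using assms(1) by (simp add: powr_realpow)
  finally show ?thesis .
qed

lemma stuck_expectation_le_one:
  fixes x k n0 n1 :: real
  assumes "1 < x" and "0 < k" and "0 < n1"
    and "x - 1 = x powr ((k - 1) / k)"
    and "n0 = n1 powr (1 / k)" and "n1 \<le> x ^ t"
  shows "n0 * (1 - 1 / x) ^ (t + 1) + n1 * (1 / x) ^ (t + 1) \<le> 1"
proof -
  have "(1 - 1 / x) ^ t = (x ^ t) powr (- 1 / k)"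
    using one_minus_inverse_eq_powr[OF _ assms(4)] assms(1,2)
    by (simp add: powr_powr powr_realpow[symmetric] mult.commute)
  also have "\<dots> \<le> n1 powr (- 1 / k)"
    using assms by (intro powr_mono2') auto
  also have "\<dots> = 1 / n0"
    using assms(3,5) by (simp add: powr_minus_divide)
  finally have "n0 * (1 - 1 / x) ^ t \<le> 1"
    using assms(3,5) by (simp add: field_simps)
  then have left: "n0 * (1 - 1 / x) ^ (t + 1) \<le> 1 - 1 / x"
    using assms(1) mult_right_mono[of _ 1 "1 - 1 / x"] by (simp add: mult.assoc)
  have "n1 / x ^ t \<le> 1"
    using assms(1,6) by simp
  then have right: "n1 * (1 / x) ^ (t + 1) \<le> 1 / x"
    using assms(1) divide_right_mono[of _ 1 x] by (simp add: power_one_over field_simps)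
  from left right show ?thesis by simp
qed

theorem theorem2:
  fixes n0 n1 :: nat and k x0 :: real
  assumes "2 \<le> n0" and "n0 \<le> n1"
    and "k = log 2 (real n1) / log 2 (real n0)"
    and "x0 \<ge> 1" and "x0 - 1 - x0 powr ((k - 1) / k) = 0"
  shows "int (ch_Kbip n0 n1) \<le> \<lceil>log 2 (real n1) / log 2 x0\<rceil> + 1"
proof -
  have ln_n: "0 < ln (real n0)" "ln (real n0) \<le> ln (real n1)"
    using assms(1,2) by simp_all
  have k: "k = ln (real n1) / ln (real n0)"
    using assms(3) by (simp add: log_def)
  with ln_n have "0 < k" by simp
  have n0_eq: "real n0 = real n1 powr (1 / k)"
    using ln_n assms(1,2) by (simp add: k powr_def)
  have x0_eq: "x0 - 1 = x0 powr ((k - 1) / k)"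
    using assms(5) by simp
  moreover have "0 < x0 powr ((k - 1) / k)"
    using assms(4) by simp
  ultimately have "1 < x0" by linarith
  define t where "t = nat \<lceil>log x0 (real n1)\<rceil>"
  have "real n1 \<le> x0 ^ t"
    unfolding t_def using \<open>1 < x0\<close> assms(1,2) by (intro le_power_nat_ceiling_log) auto
  then have bound: "real n0 * (1 - 1 / x0) ^ (t + 1) + real n1 * (1 / x0) ^ (t + 1) \<le> 1"
    using \<open>1 < x0\<close> \<open>0 < k\<close> x0_eq n0_eq assms(1,2) by (intro stuck_expectation_le_one) simp_all
  have "choosable (Kbip_V n0 n1) Kbip_E (t + 1)"
    using \<open>1 < x0\<close> assms(1,2) by (intro choosable_Kbip[OF _ _ _ bound]) simp_all
  then have "ch_Kbip n0 n1 \<le> t + 1"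
    unfolding ch_Kbip_def choice_number_def by (rule Least_le)
  moreover have "log 2 (real n1) / log 2 x0 = log x0 (real n1)"
    by (simp add: log_def)
  moreover have "0 \<le> log x0 (real n1)"
    using \<open>1 < x0\<close> assms(1,2) by simp
  ultimately show ?thesis
    unfolding t_def by linarith
qed

end
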